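(* Let $p$ be an odd prime, $m\ge3$ odd, $k\ge1$ even with $\gcd(m,k)=1$, and $\lambda$ a fixed nonsquare in $\mathbb{F}_p$. For every $(a,b,c)\in\mathbb{F}_{p^m}^3$, $S(a,b,c)$ lies in the set $\{0,\ (p-1)p^m,\ 2(p-1)p^m,\ \pm(p-1)p^{\frac{m+1}{2}},\ \pm2(p-1)p^{\frac{m+1}{2}}\}$.
   Context: $\mathrm{Tr}$ is the trace from $\mathbb{F}_{p^m}$ to $\mathbb{F}_p$ and $\zeta_p=e^{2\pi i/p}$. $S(a,b,c)=\sum_{y\in\mathbb{F}_p^*}\sum_{x\in\mathbb{F}_{p^m}}\big(\zeta_p^{y\,\mathrm{Tr}((a+b)x^2+cx^{p^k+1})}+\zeta_p^{y\,\mathrm{Tr}((a-b)\lambda x^2+c\lambda x^{p^k+1})}\big)$. *)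

theory Defs
  imports Complex_Main "HOL-Number_Theory.Number_Theory"
begin

text \<open>The field F_{p^m} is modelled as an arbitrary finite field type 'a with
  card UNIV = p^m (all such fields are isomorphic).\<close>

definition tr :: "nat \<Rightarrow> nat \<Rightarrow> 'a::field \<Rightarrow> 'a" where
  "tr p m x = (\<Sum>i<m. x ^ (p ^ i))"

definition fp_val :: "nat \<Rightarrow> 'a::field \<Rightarrow> nat" where
  "fp_val p z = (THE j. j < p \<and> of_nat j = z)"

definition chi :: "nat \<Rightarrow> nat \<Rightarrow> nat \<Rightarrow> 'a::field \<Rightarrow> complex" where
  "chi p m y z = exp (2 * pi * \<i> * of_nat (y * fp_val p (tr p m z)) / of_nat p)"

definition S_sum :: "nat \<Rightarrow> nat \<Rightarrow> nat \<Rightarrow> int \<Rightarrow> 'a::{field,finite} \<Rightarrow> 'a \<Rightarrow> 'a \<Rightarrow> complex" where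
  "S_sum p m k lam a b c =
     (\<Sum>y\<in>{1..<p}. \<Sum>x\<in>(UNIV::'a set).
        chi p m y ((a + b) * x^2 + c * x ^ (p^k + 1))
      + chi p m y ((a - b) * of_int lam * x^2 + c * of_int lam * x ^ (p^k + 1)))"

end

theory Submission
  imports Defs "HOL-Analysis.Complex_Transcendental" "HOL-Computational_Algebra.Polynomial"
begin

text \<open>
  Write \<open>S = T(a + b, c) + T(\<lambda>(a - b), \<lambda>c)\<close>, where \<open>T(A, C)\<close> is the character sum of the
  \<open>\<bbbF>\<^sub>p\<close>-quadratic form \<open>Q(x) = Tr(A x\<^sup>2 + C x\<^bsup>p^k+1\<^esup>)\<close>. Then
  \<open>T = \<Sum>\<^sub>w\<^sub>\<noteq>\<^sub>0 G(w)\<close> with Gauss sums \<open>G(w) = \<Sum>\<^sub>x \<psi>(w Q(x))\<close>, and counting zeros of \<open>Q\<close>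
  shows \<open>T = p \<cdot> #{Q = 0} - p\<^sup>m\<close> is an integer.

  Pick \<open>s\<close> with \<open>\<nu> = s\<^sup>2 + 1\<close> a nonsquare in \<open>\<bbbF>\<^sub>p\<close>. The substitution
  \<open>(x, z) \<mapsto> (s x + z, s z - x)\<close> gives \<open>G(\<nu>)\<^sup>2 = G(1)\<^sup>2\<close>, and \<open>G\<close> is constant on square classes, so
  either the two square classes cancel (\<open>T = 0\<close>) or \<open>G\<close> is constant on \<open>\<bbbF>\<^sub>p\<^sup>*\<close>; then
  \<open>T = (p - 1) G(1)\<close> and \<open>G(1)\<^sup>2 = G(1) G(-1) = p\<^sup>m |rad Q|\<close>.

  For \<open>C \<noteq> 0\<close> the radical of \<open>Q\<close> is contained in the kernel of a linearized polynomial
  \<open>C\<^bsup>p^k\<^esup> u\<^bsup>p^2k\<^esup> + 2A\<^bsup>p^k\<^esup> u\<^bsup>p^k\<^esup> + C u\<close>, which has at most \<open>p\<^sup>2\<close> roots because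
  \<open>gcd(k, m) = 1\<close>; so \<open>|rad Q| = p\<^sup>d\<close> with \<open>d \<le> 2\<close>. Since \<open>m\<close> is odd, the integer equation
  \<open>T\<^sup>2 = (p - 1)\<^sup>2 p\<^bsup>m + d\<^esup>\<close> forces \<open>d = 1\<close> and \<open>T = \<plusminus>(p - 1) p\<^bsup>(m+1)/2\<^esup>\<close>.
  For \<open>C = 0\<close> the form is zero (\<open>T = (p - 1) p\<^sup>m\<close>) or nondegenerate (\<open>T = 0\<close>).
\<close>

section \<open>Elementary number theory\<close>

lemma even_exponent_if_square:
  fixes t a :: int and q n :: nat
  assumes "prime q" "t ^ 2 = a ^ 2 * int q ^ n" "\<not> int q dvd a"
  shows "even n"
proof -
  have q: "prime_elem (int q)"
    using assms(1) by simp
  have "a \<noteq> 0" "int q \<noteq> 0"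
    using assms(1,3) by auto
  then have "t \<noteq> 0"
    using assms(2) by auto
  have "2 * multiplicity (int q) t = multiplicity (int q) (t ^ 2)"
    by (rule prime_elem_multiplicity_power_distrib[OF q \<open>t \<noteq> 0\<close>, symmetric])
  also have "\<dots> = multiplicity (int q) (a ^ 2) + multiplicity (int q) (int q ^ n)"
    unfolding assms(2) using \<open>a \<noteq> 0\<close> \<open>int q \<noteq> 0\<close>
    by (intro prime_elem_multiplicity_mult_distrib[OF q]) auto
  also have "multiplicity (int q) (a ^ 2) = 0"
    using assms(1,3) prime_dvd_mult_iff[of "int q" a a]
    by (intro not_dvd_imp_multiplicity_0) (simp add: power2_eq_square)
  also have "multiplicity (int q) (int q ^ n) = n"
    by (rule multiplicity_prime_power[OF q])
  finally show ?thesis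
    by (metis add_0 dvd_triv_left)
qed

lemma square_eq_prime_power_cases:
  fixes t :: int and q m d :: nat
  assumes "prime q" "t ^ 2 = int (q - 1) ^ 2 * int q ^ (m + d)" "odd m" "d \<le> 2"
  shows "d = 1 \<and> (t = int ((q - 1) * q ^ ((m + 1) div 2)) \<or> t = - int ((q - 1) * q ^ ((m + 1) div 2)))"
proof -
  have "q > 1"
    using assms(1) prime_gt_1_nat by blast
  have "\<not> int q dvd int (q - 1)"
  proof
    assume "int q dvd int (q - 1)"
    then have "q dvd q - 1"
      by (simp only: int_dvd_int_iff)
    with \<open>q > 1\<close> show False
      by (auto dest: dvd_imp_le)
  qed
  then have "even (m + d)"
    using even_exponent_if_square[OF assms(1,2)] by blast
  with assms(3,4) have "d = 1"
    by presburger
  with assms(3) have "m + d = 2 * ((m + 1) div 2)"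
    by simp
  then have "t ^ 2 = int ((q - 1) * q ^ ((m + 1) div 2)) ^ 2"
    using assms(2) by (simp add: power_mult_distrib flip: power_mult) (simp add: mult.commute)
  with \<open>d = 1\<close> show ?thesis
    by (simp add: power2_eq_iff)
qed

lemma QuadRes_cong:
  assumes "[a = b] (mod n)"
  shows "QuadRes n a \<longleftrightarrow> QuadRes n b"
proof -
  have "[y ^ 2 = a] (mod n) \<longleftrightarrow> [y ^ 2 = b] (mod n)" for y
    using cong_trans[of "y ^ 2" a n b] cong_trans[of "y ^ 2" b n a] assms cong_sym[OF assms] by blast
  then show ?thesis
    by (simp add: QuadRes_def)
qed

lemma ex_nonresidue_succ_residue:
  assumes "\<not> QuadRes (int p) lam" "p > 0"
  shows "\<exists>n. 0 < n \<and> n < p \<and> \<not> QuadRes (int p) (int n) \<and> QuadRes (int p) (int n - 1)"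
proof -
  define n0 where "n0 = nat (lam mod int p)"
  have "int n0 = lam mod int p"
    using assms(2) by (simp add: n0_def)
  then have "\<not> QuadRes (int p) (int n0)"
    using assms QuadRes_cong[of "lam mod int p" lam "int p"] by (auto simp: cong_def)
  have "int n0 < int p"
    using assms(2) by (simp add: \<open>int n0 = lam mod int p\<close>)
  then have "n0 < p"
    by simp
  define n where "n = (LEAST n. \<not> QuadRes (int p) (int n))"
  have nonres: "\<not> QuadRes (int p) (int n)"
    unfolding n_def by (rule LeastI[of _ n0]) fact
  have "n \<le> n0"
    unfolding n_def by (rule Least_le) fact
  have "QuadRes (int p) 0"
    unfolding QuadRes_def by (intro exI[of _ 0]) simp
  with nonres have "n > 0"
    by (cases n) auto
  then have "QuadRes (int p) (int (n - 1))"
    using not_less_Least[of "n - 1" "\<lambda>n. \<not> QuadRes (int p) (int n)"] by (simp add: n_def)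
  with nonres \<open>n > 0\<close> \<open>n \<le> n0\<close> \<open>n0 < p\<close> show ?thesis
    by (intro exI[of _ n]) (simp add: of_nat_diff)
qed

lemma QuadRes_mult_nonresidues:
  assumes "prime p" "2 < p"
    and "\<not> QuadRes (int p) a" "\<not> QuadRes (int p) b" "\<not> int p dvd a" "\<not> int p dvd b"
  shows "QuadRes (int p) (a * b)"
proof (rule ccontr)
  let ?h = "(p - 1) div 2"
  have Legendre_eq: "Legendre c (int p) = (if QuadRes (int p) c then 1 else - 1)" if "\<not> int p dvd c" for c
    using that by (simp add: Legendre_def cong_0_iff)
  assume "\<not> QuadRes (int p) (a * b)"
  moreover have "\<not> int p dvd a * b"
    using assms(1,5,6) prime_dvd_mult_iff[of "int p" a b] by simp
  ultimately have nonres: "[- 1 = (a * b) ^ ?h] (mod int p)"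
    using euler_criterion[OF assms(1,2), of "a * b"] Legendre_eq by simp
  have "[(- 1) * (- 1) = a ^ ?h * b ^ ?h] (mod int p)"
    using euler_criterion[OF assms(1,2), of a] euler_criterion[OF assms(1,2), of b] assms(3-6) Legendre_eq
    by (intro cong_mult) simp_all
  then have "[(a * b) ^ ?h = 1] (mod int p)"
    by (simp add: power_mult_distrib cong_sym_eq)
  with nonres have "[- 1 = 1] (mod int p)"
    by (rule cong_trans)
  then have "int p dvd 2"
    by (simp add: cong_iff_dvd_diff)
  with assms(2) show False
    by (auto dest: zdvd_imp_le)
qed

section \<open>Finite fields of order \<open>p\<^sup>m\<close>\<close>

locale prime_power_field =
  fixes p m :: nat and field_type :: "'a::{field,finite} itself"
  assumes prime_p: "prime p" and card_UNIV: "card (UNIV::'a set) = p ^ m"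
begin

lemma p_gt_1: "p > 1"
  using prime_p prime_gt_1_nat by blast

lemma m_pos: "m > 0"
proof (rule ccontr)
  assume "\<not> m > 0"
  then have "card (UNIV::'a set) = 1"
    using card_UNIV by simp
  moreover have "card {0, 1::'a} \<le> card (UNIV::'a set)"
    by (rule card_mono) auto
  ultimately show False
    by simp
qed

lemma CHAR_eq: "CHAR('a) = p"
proof -
  have "prime CHAR('a)"
    by (rule prime_CHAR_semidom, rule finite_imp_CHAR_pos) simp
  moreover have "CHAR('a) dvd p ^ m"
    using CHAR_dvd_CARD[where 'a='a] card_UNIV by simp
  ultimately show ?thesis
    using prime_p prime_dvd_power primes_dvd_imp_eq by blast
qed

lemma of_nat_eq_0_iff_dvd: "(of_nat n :: 'a) = 0 \<longleftrightarrow> p dvd n"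
  using of_nat_eq_0_iff_char_dvd[where 'a='a] CHAR_eq by simp

lemma of_int_eq_0_iff_dvd: "(of_int n :: 'a) = 0 \<longleftrightarrow> int p dvd n"
  using of_int_eq_0_iff_char_dvd[where 'a='a] CHAR_eq by simp

lemma of_nat_eq_of_nat_iff_cong: "(of_nat i :: 'a) = of_nat j \<longleftrightarrow> [i = j] (mod p)"
  using of_nat_eq_iff_cong_CHAR[where 'a='a] CHAR_eq by simp

lemma of_int_eq_of_int_iff_cong: "(of_int i :: 'a) = of_int j \<longleftrightarrow> [i = j] (mod int p)"
  using of_int_eq_iff_cong_CHAR[where 'a='a] CHAR_eq by simp

lemma two_neq_0_if_odd:
  assumes "odd p"
  shows "(2::'a) \<noteq> 0"
proof
  assume "(2::'a) = 0"
  then have "p dvd 2"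
    using of_nat_eq_0_iff_dvd[of 2] by simp
  then have "p \<le> 2"
    by (rule dvd_imp_le) simp
  with p_gt_1 have "p = 2"
    by simp
  with assms show False
    by simp
qed

lemma add_power_prime_power: "(x + y :: 'a) ^ p ^ i = x ^ p ^ i + y ^ p ^ i"
  using freshmans_dream'[of "p ^ i" i x y] CHAR_eq prime_p by simp

lemma sum_power_prime_power: "(\<Sum>i\<in>A. f i :: 'a) ^ p ^ j = (\<Sum>i\<in>A. f i ^ p ^ j)"
  using p_gt_1 by (induction A rule: infinite_finite_induct) (auto simp: add_power_prime_power)

lemma minus_power_prime_power: "(- x :: 'a) ^ p ^ j = - (x ^ p ^ j)"
proof -
  have "x ^ p ^ j + (- x) ^ p ^ j = (x + - x) ^ p ^ j"
    by (simp only: add_power_prime_power)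
  also have "\<dots> = 0"
    using p_gt_1 by simp
  finally show ?thesis
    by (simp add: eq_neg_iff_add_eq_0 add.commute)
qed

lemma diff_power_prime_power: "(x - y :: 'a) ^ p ^ j = x ^ p ^ j - y ^ p ^ j"
  using add_power_prime_power[of x "- y" j] by (simp add: minus_power_prime_power)

lemma power_card_minus_1:
  assumes "x \<noteq> 0"
  shows "(x :: 'a) ^ (p ^ m - 1) = 1"
proof -
  let ?U = "UNIV - {0::'a}"
  have "(\<Prod>y\<in>?U. y) = (\<Prod>y\<in>?U. x * y)"
    by (rule prod.reindex_bij_witness[of _ "\<lambda>y. x * y" "\<lambda>y. y / x"]) (use assms in auto)
  also have "\<dots> = x ^ (p ^ m - 1) * (\<Prod>y\<in>?U. y)"
    using card_UNIV by (simp add: prod.distrib card_Diff_singleton)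
  finally show ?thesis
    by simp
qed

lemma power_card_eq_self: "(x :: 'a) ^ p ^ m = x"
proof (cases "x = 0")
  case False
  have "p ^ m = Suc (p ^ m - 1)"
    using p_gt_1 by simp
  then show ?thesis
    using power_card_minus_1[OF False] by (metis power_Suc mult_1_right)
qed (use p_gt_1 in simp)

lemma power_prime_power_mod: "(x :: 'a) ^ p ^ n = x ^ p ^ (n mod m)"
proof -
  have iterate: "x ^ p ^ (m * q) = x" for q
    by (induction q) (simp_all add: power_card_eq_self power_add power_mult)
  have "x ^ p ^ n = (x ^ p ^ (m * (n div m))) ^ p ^ (n mod m)"
    by (metis div_mult_mod_eq mult.commute power_add power_mult)
  then show ?thesis
    by (simp only: iterate)
qed

lemma power_power_prime_power_mod: "((x :: 'a) ^ p ^ i) ^ p ^ j = x ^ p ^ ((i + j) mod m)"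
  by (simp add: power_prime_power_mod[symmetric] power_add power_mult)

lemma complement_mod_eq_0: "(k + k * (m - 1)) mod m = 0"
proof -
  have "k + k * (m - 1) = m * k"
    using m_pos by (cases m) (simp_all add: algebra_simps)
  then show ?thesis
    by simp
qed

definition Fp :: "'a set" where
  "Fp = {z. z ^ p = z}"

lemma Fp_power_prime_power: "z \<in> Fp \<Longrightarrow> z ^ p ^ i = z"
  by (induction i) (auto simp: Fp_def power_mult)

lemma Fp_add: "u \<in> Fp \<Longrightarrow> v \<in> Fp \<Longrightarrow> u + v \<in> Fp"
  using add_power_prime_power[of u v 1] by (simp add: Fp_def)

lemma Fp_uminus: "u \<in> Fp \<Longrightarrow> - u \<in> Fp"
  using minus_power_prime_power[of u 1] by (simp add: Fp_def)

lemma Fp_diff: "u \<in> Fp \<Longrightarrow> v \<in> Fp \<Longrightarrow> u - v \<in> Fp"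
  using diff_power_prime_power[of u v 1] by (simp add: Fp_def)

lemma Fp_mult: "u \<in> Fp \<Longrightarrow> v \<in> Fp \<Longrightarrow> u * v \<in> Fp"
  by (simp add: Fp_def power_mult_distrib)

lemma Fp_divide: "u \<in> Fp \<Longrightarrow> v \<in> Fp \<Longrightarrow> u / v \<in> Fp"
  by (simp add: Fp_def power_divide)

lemma Fp_0 [simp]: "0 \<in> Fp" and Fp_1 [simp]: "1 \<in> Fp"
  using p_gt_1 by (auto simp: Fp_def)

lemma Fp_of_nat [simp]: "of_nat j \<in> Fp"
  by (induction j) (auto intro: Fp_add)

lemma Fp_of_int [simp]: "of_int j \<in> Fp"
  by (cases j rule: int_cases) (auto intro!: Fp_uminus Fp_diff)

lemma inj_on_of_nat_Fp: "inj_on (of_nat :: nat \<Rightarrow> 'a) {..<p}"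
  by (auto intro!: inj_onI simp: of_nat_eq_of_nat_iff_cong cong_less_modulus_unique_nat)

lemma Fp_eq: "Fp = of_nat ` {..<p}"
proof (rule card_seteq[symmetric])
  show "of_nat ` {..<p} \<subseteq> Fp"
    by auto
  define P :: "'a poly" where "P = monom 1 p - monom 1 1"
  have "coeff P p = 1"
    using p_gt_1 by (simp add: P_def coeff_monom)
  then have "P \<noteq> 0"
    by auto
  have "degree P \<le> p"
    unfolding P_def using p_gt_1 degree_diff_le_max[of "monom (1::'a) p" "monom 1 1"]
    by (simp add: degree_monom_eq)
  have "card Fp \<le> card {x. poly P x = 0}"
    by (rule card_mono) (auto simp: Fp_def P_def poly_monom)
  also have "\<dots> \<le> p"
    using card_poly_roots_bound[OF \<open>P \<noteq> 0\<close>] \<open>degree P \<le> p\<close> by linarith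
  also have "p = card (of_nat ` {..<p} :: 'a set)"
    using card_image[OF inj_on_of_nat_Fp] by simp
  finally show "card Fp \<le> card (of_nat ` {..<p} :: 'a set)" .
qed simp

lemma card_Fp: "card Fp = p"
  using Fp_eq card_image[OF inj_on_of_nat_Fp] by simp

lemma Fp_cases:
  assumes "z \<in> Fp"
  obtains j where "j < p" "z = of_nat j"
  using assms Fp_eq by auto

lemma Fp_if_power_prime_power_fixed:
  assumes "coprime k m" and fixed: "z ^ p ^ k = z"
  shows "z \<in> Fp"
proof -
  have iterate: "z ^ p ^ (k * i) = z" for i
  proof (induction i)
    case (Suc i)
    have "p ^ (k * Suc i) = p ^ (k * i) * p ^ k"
      by (simp add: power_add)
    then have "z ^ p ^ (k * Suc i) = (z ^ p ^ (k * i)) ^ p ^ k"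
      by (simp only: power_mult)
    with Suc fixed show ?case
      by simp
  qed simp
  obtain j where "[k * j = 1] (mod m)"
    using cong_solve_coprime_nat[OF assms(1)] by auto
  then have "k * j mod m = 1 mod m"
    by (simp add: cong_def)
  then have "z ^ p ^ 1 = z ^ p ^ (k * j)"
    by (metis power_prime_power_mod)
  then show ?thesis
    by (simp add: Fp_def iterate)
qed

lemma fp_val_eqI: "j < p \<Longrightarrow> fp_val p (of_nat j :: 'a) = j"
  unfolding fp_val_def using inj_on_of_nat_Fp by (auto intro!: the_equality dest: inj_onD)

lemma fp_val_of_nat: "fp_val p (of_nat j :: 'a) = j mod p"
proof -
  have "(of_nat j :: 'a) = of_nat (j mod p)"
    by (simp add: of_nat_eq_of_nat_iff_cong cong_def)
  then show ?thesis
    using p_gt_1 by (simp add: fp_val_eqI)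
qed

definition addchar :: "'a \<Rightarrow> complex" where
  "addchar z = exp (2 * pi * \<i> * of_nat (fp_val p z) / of_nat p)"

lemma addchar_of_nat: "addchar (of_nat n) = exp (2 * pi * \<i> * of_nat n / of_nat p)"
  using complex_root_unity_eq[of p "n mod p" n] p_gt_1 by (simp add: addchar_def fp_val_of_nat)

lemma addchar_0 [simp]: "addchar 0 = 1"
  using addchar_of_nat[of 0] by simp

lemma addchar_add:
  assumes "u \<in> Fp" "v \<in> Fp"
  shows "addchar (u + v) = addchar u * addchar v"
proof -
  obtain i j where "u = of_nat i" "v = of_nat j"
    using assms Fp_cases by metis
  then show ?thesis
    using addchar_of_nat[of "i + j"] by (simp add: addchar_of_nat distrib_left add_divide_distrib exp_add)
qed

lemma addchar_eq_1_iff: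
  assumes "v \<in> Fp"
  shows "addchar v = 1 \<longleftrightarrow> v = 0"
proof -
  obtain j where "v = of_nat j"
    using assms Fp_cases by metis
  then show ?thesis
    using complex_root_unity_eq_1[of p j] p_gt_1 by (simp add: addchar_of_nat of_nat_eq_0_iff_dvd)
qed

lemma sum_addchar_mult:
  assumes "v \<in> Fp"
  shows "(\<Sum>w\<in>Fp. addchar (w * v)) = (if v = 0 then of_nat p else 0)"
proof (cases "v = 0")
  case False
  let ?S = "\<Sum>w\<in>Fp. addchar (w * v)"
  have "?S = (\<Sum>w\<in>Fp. addchar ((w + 1) * v))"
    by (rule sum.reindex_bij_witness[of _ "\<lambda>w. w + 1" "\<lambda>w. w - 1"]) (auto intro: Fp_add Fp_diff)
  also have "\<dots> = ?S * addchar v"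
    by (simp add: sum_distrib_right distrib_right addchar_add Fp_mult assms)
  finally have "(1 - addchar v) * ?S = 0"
    by (simp add: algebra_simps)
  then show ?thesis
    using False addchar_eq_1_iff[OF assms] by simp
qed (simp add: card_Fp)

lemma sum_of_nat_eq_sum_Fp: "(\<Sum>y\<in>{1..<p}. g (of_nat y :: 'a)) = (\<Sum>w\<in>Fp - {0}. g w)"
proof -
  have "inj_on (of_nat :: nat \<Rightarrow> 'a) {1..<p}"
    by (rule inj_on_subset[OF inj_on_of_nat_Fp]) auto
  moreover have "(of_nat :: nat \<Rightarrow> 'a) ` {1..<p} = Fp - {0}"
  proof -
    have "{1..<p} = {..<p} - {0}"
      by auto
    then have "(of_nat :: nat \<Rightarrow> 'a) ` {1..<p} = of_nat ` {..<p} - of_nat ` {0}"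
      using inj_on_image_set_diff[OF inj_on_of_nat_Fp] p_gt_1 by auto
    then show ?thesis
      by (simp add: Fp_eq)
  qed
  ultimately show ?thesis
    using sum.reindex[of "of_nat :: nat \<Rightarrow> 'a" "{1..<p}" g] by simp
qed

lemma tr_add: "tr p m (x + y :: 'a) = tr p m x + tr p m y"
  by (simp add: tr_def add_power_prime_power sum.distrib)

lemma tr_mult_Fp: "\<alpha> \<in> Fp \<Longrightarrow> tr p m (\<alpha> * x :: 'a) = \<alpha> * tr p m x"
  by (simp add: tr_def power_mult_distrib Fp_power_prime_power sum_distrib_left)

lemma tr_0 [simp]: "tr p m (0::'a) = 0"
  using tr_mult_Fp[OF Fp_0, of 0] by simp

lemma tr_power_p: "tr p m (x ^ p :: 'a) = tr p m x ^ p"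
proof -
  have "tr p m x ^ p = (\<Sum>i<m. (x ^ p ^ i) ^ p)"
    using sum_power_prime_power[of "\<lambda>i. x ^ p ^ i" "{..<m}" 1] by (simp add: tr_def)
  also have "\<dots> = tr p m (x ^ p)"
    by (simp add: tr_def power_mult[symmetric] mult.commute)
  finally show ?thesis ..
qed

lemma tr_in_Fp: "tr p m (x :: 'a) \<in> Fp"
proof -
  let ?f = "\<lambda>i. x ^ p ^ i"
  have "tr p m x ^ p = tr p m (x ^ p)"
    by (rule tr_power_p[symmetric])
  also have "\<dots> = (\<Sum>i<m. ?f (Suc i))"
    by (simp add: tr_def power_mult[symmetric] mult.commute)
  also have "\<dots> = (\<Sum>i<m. ?f i)"
    using sum.lessThan_Suc_shift[of ?f m] sum.lessThan_Suc[of ?f m] power_card_eq_self[of x]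
    by (simp add: add.commute)
  finally show ?thesis
    by (simp add: Fp_def tr_def)
qed

lemma tr_power_prime_power: "tr p m (x ^ p ^ j :: 'a) = tr p m x"
proof (induction j)
  case (Suc j)
  have "tr p m (x ^ p ^ Suc j) = tr p m (x ^ p ^ j) ^ p"
    by (simp add: tr_power_p[symmetric] power_mult[symmetric] mult.commute)
  also have "\<dots> = tr p m (x ^ p ^ j)"
    using tr_in_Fp by (simp add: Fp_def)
  finally show ?case
    using Suc by simp
qed simp

lemma chi_eq_addchar: "chi p m y z = addchar (of_nat y * tr p m (z :: 'a))"
proof -
  obtain j where j: "tr p m z = of_nat j"
    using tr_in_Fp Fp_cases by metis
  then have "chi p m y z = exp (2 * pi * \<i> * of_nat (y * (j mod p)) / of_nat p)"
    by (simp add: chi_def fp_val_of_nat)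
  also have "\<dots> = exp (2 * pi * \<i> * of_nat (y * j) / of_nat p)"
    using complex_root_unity_eq[of p "y * (j mod p)" "y * j"] p_gt_1 by (simp add: mod_mult_right_eq)
  also have "\<dots> = addchar (of_nat y * tr p m z)"
    using addchar_of_nat[of "y * j"] by (simp add: j)
  finally show ?thesis .
qed

text \<open>The trace is a polynomial of degree \<open>p\<^bsup>m-1\<^esup>\<close>, so it cannot vanish on all \<open>p\<^sup>m\<close> elements.\<close>
lemma ex_tr_neq_0: "\<exists>z::'a. tr p m z \<noteq> 0"
proof (rule ccontr)
  assume "\<not> (\<exists>z::'a. tr p m z \<noteq> 0)"
  then have tr_eq_0: "tr p m z = 0" for z :: 'a
    by blast
  define T :: "'a poly" where "T = (\<Sum>i<m. monom 1 (p ^ i))"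
  have "coeff T (p ^ (m - 1)) = 1"
    using m_pos p_gt_1 by (simp add: T_def coeff_sum coeff_monom power_inject_exp)
  then have "T \<noteq> 0"
    by auto
  have "degree T \<le> p ^ (m - 1)"
    unfolding T_def
  proof (rule degree_sum_le)
    fix i assume "i \<in> {..<m}"
    then have "p ^ i \<le> p ^ (m - 1)"
      using p_gt_1 by (intro power_increasing) auto
    then show "degree (monom (1::'a) (p ^ i)) \<le> p ^ (m - 1)"
      by (simp add: degree_monom_eq)
  qed simp
  have "{z. poly T z = 0} = (UNIV :: 'a set)"
    using tr_eq_0 by (simp add: T_def tr_def poly_sum poly_monom)
  then have "p ^ m \<le> p ^ (m - 1)"
    using card_poly_roots_bound[OF \<open>T \<noteq> 0\<close>] \<open>degree T \<le> _\<close> card_UNIV by simp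
  moreover have "p ^ (m - 1) < p ^ m"
    using p_gt_1 m_pos by (intro power_strict_increasing) auto
  ultimately show False
    by simp
qed

lemma tr_mult_eq_0_imp_eq_0:
  assumes "\<And>z. tr p m (z * y) = 0"
  shows "(y :: 'a) = 0"
proof (rule ccontr)
  assume "y \<noteq> 0"
  obtain z :: 'a where "tr p m z \<noteq> 0"
    using ex_tr_neq_0 by blast
  moreover have "tr p m ((z / y) * y) = 0"
    by (rule assms)
  ultimately show False
    using \<open>y \<noteq> 0\<close> by simp
qed

lemma card_additive_subgroup:
  assumes "(0::'a) \<in> H" "\<And>x y. x \<in> H \<Longrightarrow> y \<in> H \<Longrightarrow> x + y \<in> H" "\<And>x. x \<in> H \<Longrightarrow> - x \<in> H"
  shows "\<exists>d\<le>m. card H = p ^ d"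
proof -
  define G where "G = \<lparr>carrier = (UNIV :: 'a set), monoid.mult = (+), one = (0 :: 'a)\<rparr>"
  interpret group G
  proof (rule groupI)
    fix x assume "x \<in> carrier G"
    show "\<exists>y\<in>carrier G. y \<otimes>\<^bsub>G\<^esub> x = \<one>\<^bsub>G\<^esub>"
      by (intro bexI[of _ "- x"]) (auto simp: G_def)
  qed (auto simp: G_def add_ac)
  have inv_G: "inv\<^bsub>G\<^esub> x = - x" for x
    by (intro inv_equality) (auto simp: G_def)
  have "subgroup H G"
    using assms inv_G unfolding G_def by unfold_locales auto
  then have "card (rcosets\<^bsub>G\<^esub> H) * card H = Coset.order G"
    by (intro lagrange_finite) (simp_all add: G_def)
  then have "card H dvd p ^ m"
    using card_UNIV by (metis Coset.order_def G_def dvd_triv_right partial_object.select_convs(1))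
  then show ?thesis
    using divides_primepow_nat[OF prime_p] by auto
qed

end

section \<open>Quadratic forms over the prime field and their Gauss sums\<close>

lemma bij_rotation:
  assumes "s ^ 2 + 1 \<noteq> (0 :: 'a :: {field,finite})"
  shows "bij (\<lambda>(x, z). (s * x + z, s * z - x))"
proof -
  have "inj (\<lambda>(x :: 'a, z). (s * x + z, s * z - x))"
  proof (rule injI, clarify)
    fix x z x' z' :: 'a
    assume eq: "s * x + z = s * x' + z'" "s * z - x = s * z' - x'"
    have "(s ^ 2 + 1) * (x - x') = s * ((s * x + z) - (s * x' + z')) + ((s * z' - x') - (s * z - x))"
      by (simp add: algebra_simps power2_eq_square)
    then have "(s ^ 2 + 1) * (x - x') = 0"
      by (simp only: eq) simp
    with assms eq show "x = x' \<and> z = z'"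
      by simp
  qed
  then show ?thesis
    by (simp add: bij_def finite_UNIV_inj_surj)
qed

locale Fp_quadratic_form = prime_power_field p m field_type
  for p m and field_type :: "'a::{field,finite} itself" +
  fixes Q :: "'a \<Rightarrow> 'a" and B :: "'a \<Rightarrow> 'a \<Rightarrow> 'a"
  assumes odd_p: "odd p"
    and Q_in_Fp: "Q x \<in> Fp"
    and Q_add: "Q (x + z) = Q x + Q z + B x z"
    and Q_mult_Fp: "\<alpha> \<in> Fp \<Longrightarrow> Q (\<alpha> * x) = \<alpha> ^ 2 * Q x"
    and B_add_right: "B x (z + z') = B x z + B x z'"
begin

lemma two_neq_0: "(2::'a) \<noteq> 0"
  by (rule two_neq_0_if_odd[OF odd_p])

lemma B_commute: "B x z = B z x"
  using Q_add[of x z] Q_add[of z x] by (simp add: add.commute)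

lemma B_add_left: "B (x + x') z = B x z + B x' z"
  using B_commute[of "x + x'" z] B_add_right[of z x x'] B_commute[of z x] B_commute[of z x'] by simp

lemma B_in_Fp: "B x z \<in> Fp"
proof -
  have "B x z = Q (x + z) - Q x - Q z"
    using Q_add[of x z] by simp
  then show ?thesis
    by (simp add: Fp_diff Q_in_Fp)
qed

lemma B_0_right [simp]: "B x 0 = 0"
  using B_add_right[of x 0 0] by (metis add.right_neutral add_cancel_left_right)

lemma B_uminus_right: "B x (- z) = - B x z"
  using B_add_right[of x z "- z"] by (simp add: eq_neg_iff_add_eq_0 add.commute)

lemma B_mult_Fp_left:
  assumes "\<alpha> \<in> Fp"
  shows "B (\<alpha> * x) z = \<alpha> * B x z"
proof -
  obtain j where "\<alpha> = of_nat j"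
    using assms Fp_cases by metis
  moreover have "B (of_nat j * x) z = of_nat j * B x z"
    by (induction j) (simp_all add: distrib_right B_add_left B_commute[of 0])
  ultimately show ?thesis
    by simp
qed

lemma Q_uminus: "Q (- x) = Q x"
  using Q_mult_Fp[of "- 1" x] by (simp add: Fp_uminus)

definition radical :: "'a set" where
  "radical = {u. \<forall>z. B z u = 0}"

lemma Q_radical:
  assumes "u \<in> radical"
  shows "Q u = 0"
proof -
  have "Q u + Q u = Q (u + - u)"
    using Q_add[of u "- u"] assms by (simp add: Q_uminus B_uminus_right radical_def)
  also have "\<dots> = 0"
    using Q_mult_Fp[of 0 0] by simp
  finally have "2 * Q u = 0"
    by (simp only: mult_2)
  then show ?thesis
    using two_neq_0 by simp
qed

lemma card_radical: "\<exists>d\<le>m. card radical = p ^ d"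
  by (rule card_additive_subgroup) (auto simp: radical_def B_add_right B_uminus_right)

definition gauss_sum :: "'a \<Rightarrow> complex" where
  "gauss_sum w = (\<Sum>x\<in>UNIV. addchar (w * Q x))"

lemma gauss_sum_0: "gauss_sum 0 = of_nat (p ^ m)"
  using card_UNIV by (simp add: gauss_sum_def)

lemma sum_gauss_sum_Fp: "(\<Sum>w\<in>Fp. gauss_sum w) = of_nat p * of_nat (card {x. Q x = 0})"
proof -
  have "(\<Sum>w\<in>Fp. gauss_sum w) = (\<Sum>x\<in>UNIV. \<Sum>w\<in>Fp. addchar (w * Q x))"
    unfolding gauss_sum_def by (rule sum.swap)
  also have "\<dots> = (\<Sum>x\<in>UNIV. if Q x = 0 then of_nat p else 0)"
    by (simp add: sum_addchar_mult Q_in_Fp)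
  finally show ?thesis
    by (simp add: sum.If_cases Int_def)
qed

lemma sum_gauss_sum_eq_of_int:
  "(\<Sum>w\<in>Fp - {0}. gauss_sum w) = of_int (int p * int (card {x. Q x = 0}) - int (p ^ m))"
  using sum.remove[of Fp 0 gauss_sum] sum_gauss_sum_Fp gauss_sum_0 by (simp add: algebra_simps)

lemma gauss_sum_mult_square:
  assumes "\<alpha> \<in> Fp" "\<alpha> \<noteq> 0"
  shows "gauss_sum (\<alpha> ^ 2 * w) = gauss_sum w"
proof -
  have "gauss_sum (\<alpha> ^ 2 * w) = (\<Sum>x\<in>UNIV. addchar (w * Q (\<alpha> * x)))"
    unfolding gauss_sum_def by (intro sum.cong refl) (subst Q_mult_Fp[OF assms(1)], simp add: mult_ac)
  also have "\<dots> = gauss_sum w"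
    unfolding gauss_sum_def
    by (rule sum.reindex_bij_witness[of _ "\<lambda>x. x / \<alpha>" "\<lambda>x. \<alpha> * x"]) (use assms in auto)
  finally show ?thesis .
qed

lemma power2_gauss_sum:
  assumes "w \<in> Fp"
  shows "gauss_sum w ^ 2 = (\<Sum>(x, z)\<in>UNIV. addchar (w * (Q x + Q z)))"
proof -
  have "gauss_sum w ^ 2 = (\<Sum>x\<in>UNIV. \<Sum>z\<in>UNIV. addchar (w * Q x) * addchar (w * Q z))"
    by (simp add: gauss_sum_def power2_eq_square sum_product)
  also have "\<dots> = (\<Sum>x\<in>UNIV. \<Sum>z\<in>UNIV. addchar (w * (Q x + Q z)))"
    by (simp add: distrib_left addchar_add Fp_mult Q_in_Fp assms)
  finally show ?thesis
    by (simp add: sum.cartesian_product UNIV_Times_UNIV[symmetric] del: UNIV_Times_UNIV)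
qed

text \<open>On \<open>x + i z\<close> the substitution \<open>(x, z) \<mapsto> (s x + z, s z - x)\<close> is multiplication by
  \<open>s - i\<close>, which multiplies the form \<open>Q x + Q z\<close> by the norm \<open>s\<^sup>2 + 1\<close>.\<close>
lemma Q_rotation:
  assumes "s \<in> Fp"
  shows "Q (s * x + z) + Q (s * z - x) = (s ^ 2 + 1) * (Q x + Q z)"
proof -
  have "Q (s * x + z) = s ^ 2 * Q x + Q z + s * B x z"
    using Q_add[of "s * x" z] by (simp add: Q_mult_Fp B_mult_Fp_left assms)
  moreover have "Q (s * z - x) = s ^ 2 * Q z + Q x - s * B x z"
    using Q_add[of "s * z" "- x"]
    by (simp add: Q_mult_Fp B_mult_Fp_left assms Q_uminus B_uminus_right B_commute[of z])
  ultimately show ?thesis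
    by (simp add: algebra_simps)
qed

lemma power2_gauss_sum_mult_norm:
  assumes "s \<in> Fp" "s ^ 2 + 1 \<noteq> 0" "w \<in> Fp"
  shows "gauss_sum ((s ^ 2 + 1) * w) ^ 2 = gauss_sum w ^ 2"
proof -
  have norm_Fp: "s ^ 2 + 1 \<in> Fp"
    using assms(1) by (simp add: Fp_add Fp_mult power2_eq_square)
  let ?f = "\<lambda>(x, z). addchar (w * (Q x + Q z))"
  have "gauss_sum ((s ^ 2 + 1) * w) ^ 2 = (\<Sum>xz\<in>UNIV. ?f ((\<lambda>(x, z). (s * x + z, s * z - x)) xz))"
    using power2_gauss_sum[OF Fp_mult[OF norm_Fp assms(3)]]
    by (simp add: case_prod_unfold Q_rotation[OF assms(1)] mult_ac)
  also have "\<dots> = (\<Sum>xz\<in>UNIV. ?f xz)"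
    by (rule sum.reindex_bij_betw[OF bij_rotation[OF assms(2)]])
  finally show ?thesis
    using power2_gauss_sum[OF assms(3)] by simp
qed

lemma sum_addchar_B:
  assumes "w \<in> Fp" "w \<noteq> 0"
  shows "(\<Sum>z\<in>UNIV. addchar (w * B z u)) = (if u \<in> radical then of_nat (p ^ m) else 0)"
proof (cases "u \<in> radical")
  case False
  then obtain z0 where z0: "B z0 u \<noteq> 0"
    by (auto simp: radical_def)
  let ?S = "\<Sum>z\<in>UNIV. addchar (w * B z u)"
  have "?S = (\<Sum>z\<in>UNIV. addchar (w * B (z + z0) u))"
    by (rule sum.reindex_bij_witness[of _ "\<lambda>z. z + z0" "\<lambda>z. z - z0"]) auto
  also have "\<dots> = ?S * addchar (w * B z0 u)"
    by (simp add: sum_distrib_right B_add_left distrib_left addchar_add Fp_mult B_in_Fp assms(1))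
  finally have "(1 - addchar (w * B z0 u)) * ?S = 0"
    by (simp add: algebra_simps)
  moreover have "addchar (w * B z0 u) \<noteq> 1"
    using addchar_eq_1_iff[OF Fp_mult[OF assms(1) B_in_Fp]] assms(2) z0 by simp
  ultimately show ?thesis
    using False by simp
qed (use card_UNIV in \<open>simp add: radical_def\<close>)

lemma gauss_sum_mult_gauss_sum_uminus:
  assumes "w \<in> Fp" "w \<noteq> 0"
  shows "gauss_sum w * gauss_sum (- w) = of_nat (p ^ m) * of_nat (card radical)"
proof -
  have addchar_split: "addchar (w * Q (z + u)) * addchar (- w * Q z) = addchar (w * Q u) * addchar (w * B z u)"
    for z u
  proof -
    have "w * Q (z + u) + - w * Q z = w * Q u + w * B z u"
      using Q_add[of z u] by (simp add: algebra_simps)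
    then show ?thesis
      using assms(1) by (simp flip: addchar_add add: Fp_mult Fp_uminus Q_in_Fp B_in_Fp)
  qed
  have shift: "(\<Sum>x\<in>UNIV. f x) = (\<Sum>u\<in>UNIV. f (z + u))" for f :: "'a \<Rightarrow> complex" and z
    by (rule sum.reindex_bij_witness[of _ "\<lambda>u. z + u" "\<lambda>x. x - z"]) auto
  have "gauss_sum w * gauss_sum (- w) = (\<Sum>z\<in>UNIV. \<Sum>x\<in>UNIV. addchar (w * Q x) * addchar (- w * Q z))"
    unfolding gauss_sum_def sum_product by (rule sum.swap)
  also have "\<dots> = (\<Sum>z\<in>UNIV. \<Sum>u\<in>UNIV. addchar (w * Q (z + u)) * addchar (- w * Q z))"
    by (intro sum.cong refl shift)
  also have "\<dots> = (\<Sum>z\<in>UNIV. \<Sum>u\<in>UNIV. addchar (w * Q u) * addchar (w * B z u))"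
    by (simp only: addchar_split)
  also have "\<dots> = (\<Sum>u\<in>UNIV. addchar (w * Q u) * (\<Sum>z\<in>UNIV. addchar (w * B z u)))"
    by (subst sum.swap) (simp add: sum_distrib_left)
  also have "\<dots> = (\<Sum>u\<in>UNIV. if u \<in> radical then of_nat (p ^ m) else 0)"
    by (intro sum.cong refl) (simp add: sum_addchar_B assms Q_radical)
  finally show ?thesis
    by (simp add: sum.If_cases Int_def)
qed

context
  fixes \<nu> :: 'a
  assumes \<nu>_in_Fp: "\<nu> \<in> Fp" and \<nu>_neq_0: "\<nu> \<noteq> 0"
    and square_classes: "\<And>w. w \<in> Fp \<Longrightarrow> w \<noteq> 0 \<Longrightarrow> \<exists>\<alpha>\<in>Fp. \<alpha> \<noteq> 0 \<and> (w = \<alpha> ^ 2 \<or> w = \<nu> * \<alpha> ^ 2)"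
begin

lemma gauss_sum_square_classes:
  assumes "w \<in> Fp" "w \<noteq> 0"
  shows "gauss_sum w = gauss_sum 1 \<and> gauss_sum (\<nu> * w) = gauss_sum \<nu> \<or>
         gauss_sum w = gauss_sum \<nu> \<and> gauss_sum (\<nu> * w) = gauss_sum 1"
proof -
  obtain \<alpha> where \<alpha>: "\<alpha> \<in> Fp" "\<alpha> \<noteq> 0" and w: "w = \<alpha> ^ 2 \<or> w = \<nu> * \<alpha> ^ 2"
    using square_classes[OF assms] by blast
  from w show ?thesis
  proof
    assume "w = \<alpha> ^ 2"
    then show ?thesis
      using gauss_sum_mult_square[OF \<alpha>, of 1] gauss_sum_mult_square[OF \<alpha>, of \<nu>] by (simp add: mult.commute)
  next
    assume w: "w = \<nu> * \<alpha> ^ 2"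
    have "gauss_sum (\<nu> * w) = gauss_sum ((\<nu> * \<alpha>) ^ 2 * 1)"
      by (simp add: w power2_eq_square mult_ac)
    also have "\<dots> = gauss_sum 1"
      using \<alpha> \<nu>_in_Fp \<nu>_neq_0 by (intro gauss_sum_mult_square) (simp_all add: Fp_mult)
    finally show ?thesis
      using gauss_sum_mult_square[OF \<alpha>, of \<nu>] w by (simp add: mult.commute)
  qed
qed

lemma sum_gauss_sum_cases:
  assumes "gauss_sum \<nu> ^ 2 = gauss_sum 1 ^ 2"
  shows "(\<Sum>w\<in>Fp - {0}. gauss_sum w) = 0 \<or>
    (\<Sum>w\<in>Fp - {0}. gauss_sum w) = of_nat (p - 1) * gauss_sum 1 \<and>
    gauss_sum 1 ^ 2 = of_nat (p ^ m) * of_nat (card radical)"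
proof -
  from assms consider "gauss_sum \<nu> = gauss_sum 1" | "gauss_sum \<nu> = - gauss_sum 1"
    by (metis power2_eq_iff)
  then show ?thesis
  proof cases
    case 1
    then have const: "gauss_sum w = gauss_sum 1" if "w \<in> Fp - {0}" for w
      using gauss_sum_square_classes[of w] that by auto
    have "(\<Sum>w\<in>Fp - {0}. gauss_sum w) = (\<Sum>w\<in>Fp - {0}. gauss_sum 1)"
      by (rule sum.cong[OF refl const])
    also have "\<dots> = of_nat (p - 1) * gauss_sum 1"
      by (simp add: card_Fp card_Diff_singleton)
    moreover have "gauss_sum 1 ^ 2 = of_nat (p ^ m) * of_nat (card radical)"
      using gauss_sum_mult_gauss_sum_uminus[of 1] const[of "- 1"] by (simp add: power2_eq_square Fp_uminus)
    ultimately show ?thesis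
      by simp
  next
    case 2
    then have negate: "gauss_sum (\<nu> * w) = - gauss_sum w" if "w \<in> Fp - {0}" for w
      using gauss_sum_square_classes[of w] that by auto
    have "(\<Sum>w\<in>Fp - {0}. gauss_sum w) = (\<Sum>w\<in>Fp - {0}. gauss_sum (\<nu> * w))"
      by (rule sum.reindex_bij_witness[of _ "\<lambda>w. \<nu> * w" "\<lambda>w. w / \<nu>"])
         (use \<nu>_in_Fp \<nu>_neq_0 in \<open>auto simp: Fp_mult Fp_divide\<close>)
    also have "\<dots> = - (\<Sum>w\<in>Fp - {0}. gauss_sum w)"
      by (simp add: sum_negf negate)
    finally show ?thesis
      by simp
  qed
qed

lemma sum_gauss_sum_nonzero:
  assumes "gauss_sum \<nu> ^ 2 = gauss_sum 1 ^ 2" "card radical \<le> p ^ 2" "odd m"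
    and "(\<Sum>w\<in>Fp - {0}. gauss_sum w) \<noteq> 0"
  shows "card radical = p \<and> (\<Sum>w\<in>Fp - {0}. gauss_sum w) \<in>
    {of_nat ((p - 1) * p ^ ((m + 1) div 2)), - of_nat ((p - 1) * p ^ ((m + 1) div 2))}"
proof -
  obtain d where d: "card radical = p ^ d"
    using card_radical by blast
  with assms(2) p_gt_1 have "d \<le> 2"
    by (metis power_le_imp_le_exp)
  define t where "t = int p * int (card {x. Q x = 0}) - int (p ^ m)"
  have sum_t: "(\<Sum>w\<in>Fp - {0}. gauss_sum w) = of_int t"
    by (simp add: t_def sum_gauss_sum_eq_of_int)
  from sum_gauss_sum_cases[OF assms(1)] assms(4)
  have "of_int t = of_nat (p - 1) * gauss_sum 1" and G1: "gauss_sum 1 ^ 2 = of_nat (p ^ m) * of_nat (card radical)"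
    by (auto simp: sum_t)
  then have "(of_int (t ^ 2) :: complex) = of_int (int (p - 1) ^ 2 * int p ^ (m + d))"
    by (simp add: power_mult_distrib d power_add)
  then have "t ^ 2 = int (p - 1) ^ 2 * int p ^ (m + d)"
    by (simp only: of_int_eq_iff)
  from square_eq_prime_power_cases[OF prime_p this assms(3) \<open>d \<le> 2\<close>] show ?thesis
    using d sum_t by auto
qed

end

end

section \<open>Square classes of the prime field\<close>

context prime_power_field
begin

lemma of_int_eq_square_if_QuadRes:
  assumes "QuadRes (int p) n"
  shows "\<exists>\<alpha>\<in>Fp. of_int n = (\<alpha> :: 'a) ^ 2"
proof -
  obtain y where "[y ^ 2 = n] (mod int p)"
    using assms by (auto simp: QuadRes_def)
  then have "of_int n = (of_int y :: 'a) ^ 2"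
    by (simp flip: of_int_eq_of_int_iff_cong)
  then show ?thesis
    by (intro bexI[of _ "of_int y"]) simp_all
qed

lemma of_int_neq_0_if_not_QuadRes:
  assumes "\<not> QuadRes (int p) n"
  shows "(of_int n :: 'a) \<noteq> 0"
proof
  assume "(of_int n :: 'a) = 0"
  then have "[n = 0 ^ 2] (mod int p)"
    by (simp add: of_int_eq_0_iff_dvd cong_0_iff)
  with assms show False
    unfolding QuadRes_def by (metis cong_sym)
qed

lemma Fp_square_classes:
  assumes "2 < p" "\<not> QuadRes (int p) (int n)" "\<not> int p dvd int n" "w \<in> Fp" "w \<noteq> 0"
  shows "\<exists>\<alpha>\<in>Fp. \<alpha> \<noteq> 0 \<and> (w = \<alpha> ^ 2 \<or> w = of_nat n * \<alpha> ^ 2)"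
proof -
  obtain j where j: "w = of_nat j"
    using assms(4) Fp_cases by metis
  with assms(5) have j_ndvd: "\<not> int p dvd int j"
    by (auto simp: of_nat_eq_0_iff_dvd)
  show ?thesis
  proof (cases "QuadRes (int p) (int j)")
    case True
    then obtain \<alpha> where "\<alpha> \<in> Fp" "w = \<alpha> ^ 2"
      using of_int_eq_square_if_QuadRes[of "int j"] j by auto
    with assms(5) show ?thesis
      by auto
  next
    case False
    then have "QuadRes (int p) (int j * int n)"
      using QuadRes_mult_nonresidues[OF prime_p assms(1)] assms(2,3) j_ndvd by blast
    then obtain \<beta> where "\<beta> \<in> Fp" and \<beta>: "w * of_nat n = \<beta> ^ 2"
      using of_int_eq_square_if_QuadRes j by fastforce
    have "(of_nat n :: 'a) \<noteq> 0"
      using assms(3) of_nat_eq_0_iff_dvd by simp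
    define \<alpha> where "\<alpha> = \<beta> / of_nat n"
    have w: "w = of_nat n * \<alpha> ^ 2"
      using \<beta> \<open>(of_nat n :: 'a) \<noteq> 0\<close> by (simp add: \<alpha>_def power_divide power2_eq_square field_simps)
    moreover have "\<alpha> \<in> Fp"
      using \<open>\<beta> \<in> Fp\<close> by (simp add: \<alpha>_def Fp_divide)
    moreover have "\<alpha> \<noteq> 0"
      using w assms(5) by auto
    ultimately show ?thesis
      by blast
  qed
qed

lemma ex_square_classes:
  assumes "odd p" "\<not> QuadRes (int p) lam"
  shows "\<exists>s\<in>Fp. s ^ 2 + 1 \<noteq> 0 \<and>
    (\<forall>w\<in>Fp. w \<noteq> 0 \<longrightarrow> (\<exists>\<alpha>\<in>Fp. \<alpha> \<noteq> 0 \<and> (w = \<alpha> ^ 2 \<or> w = (s ^ 2 + 1) * \<alpha> ^ 2)))"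
proof -
  have "2 < p"
    using assms(1) p_gt_1 by (cases "p = 2") auto
  obtain n where n: "0 < n" "n < p" "\<not> QuadRes (int p) (int n)" "QuadRes (int p) (int n - 1)"
    using ex_nonresidue_succ_residue[OF assms(2)] p_gt_1 by auto
  have n_ndvd: "\<not> int p dvd int n"
    using n(1,2) by (auto dest: dvd_imp_le)
  obtain s where "s \<in> Fp" and s: "of_int (int n - 1) = s ^ 2"
    using of_int_eq_square_if_QuadRes[OF n(4)] by blast
  have norm: "s ^ 2 + 1 = of_nat n"
    by (simp flip: s)
  have "(of_nat n :: 'a) \<noteq> 0"
    using n_ndvd of_nat_eq_0_iff_dvd by simp
  with \<open>s \<in> Fp\<close> Fp_square_classes[OF \<open>2 < p\<close> n(3) n_ndvd] show ?thesis
    unfolding norm[symmetric] by blast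
qed

section \<open>Roots of linearized polynomials\<close>

definition moore_det :: "nat \<Rightarrow> 'a \<Rightarrow> 'a \<Rightarrow> 'a" where
  "moore_det k x y = x * y ^ p ^ k - y * x ^ p ^ k"

lemma div_in_Fp_if_moore_det_eq_0:
  assumes "coprime k m" "x \<noteq> 0" "moore_det k x y = 0"
  shows "y / x \<in> Fp"
proof (rule Fp_if_power_prime_power_fixed[OF assms(1)])
  show "(y / x) ^ p ^ k = y / x"
    using assms(2,3) by (simp add: moore_det_def power_divide field_simps)
qed

context
  fixes k :: nat and K :: "'a set" and a b c :: 'a
  assumes coprime_k_m: "coprime k m" and a_neq_0: "a \<noteq> 0" and c_neq_0: "c \<noteq> 0"
    and roots: "\<And>u. u \<in> K \<Longrightarrow> a * (u ^ p ^ k) ^ p ^ k + b * u ^ p ^ k + c * u = 0"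
begin

lemma moore_det_power_prime_power:
  assumes "x \<in> K" "y \<in> K"
  shows "moore_det k x y ^ p ^ k = c / a * moore_det k x y"
proof -
  have frob2: "a * (u ^ p ^ k) ^ p ^ k = - b * u ^ p ^ k - c * u" if "u \<in> K" for u
    using roots[OF that] by (simp add: algebra_simps eq_diff_eq eq_neg_iff_add_eq_0)
  have "a * moore_det k x y ^ p ^ k =
      x ^ p ^ k * (a * (y ^ p ^ k) ^ p ^ k) - y ^ p ^ k * (a * (x ^ p ^ k) ^ p ^ k)"
    by (simp add: moore_det_def diff_power_prime_power power_mult_distrib algebra_simps)
  also have "\<dots> = c * moore_det k x y"
    by (simp add: frob2 assms moore_det_def algebra_simps)
  finally show ?thesis
    using a_neq_0 by (simp add: field_simps)
qed

lemma root_in_Fp_span: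
  assumes x1: "x1 \<in> K" "x1 \<noteq> 0" and x3: "x3 \<in> K" "moore_det k x1 x3 \<noteq> 0" and "y \<in> K"
  shows "y \<in> (\<lambda>(\<alpha>, \<beta>). \<alpha> * x1 + \<beta> * x3) ` (Fp \<times> Fp)"
proof -
  define \<beta> where "\<beta> = moore_det k x1 y / moore_det k x1 x3"
  \<comment> \<open>both determinants lie in the same eigenspace of the Frobenius\<close>
  have "\<beta> ^ p ^ k = \<beta>"
    using moore_det_power_prime_power[OF x1(1) \<open>y \<in> K\<close>] moore_det_power_prime_power[OF x1(1) x3(1)]
      c_neq_0 a_neq_0 by (simp add: \<beta>_def power_divide)
  then have "\<beta> \<in> Fp"
    by (rule Fp_if_power_prime_power_fixed[OF coprime_k_m])
  have "moore_det k x1 (y - \<beta> * x3) = moore_det k x1 y - \<beta> * moore_det k x1 x3"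
    using \<open>\<beta> ^ p ^ k = \<beta>\<close>
    by (simp add: moore_det_def diff_power_prime_power power_mult_distrib algebra_simps)
  also have "\<dots> = 0"
    using x3(2) by (simp add: \<beta>_def)
  finally have "(y - \<beta> * x3) / x1 \<in> Fp"
    by (rule div_in_Fp_if_moore_det_eq_0[OF coprime_k_m x1(2)])
  with \<open>\<beta> \<in> Fp\<close> x1(2) show ?thesis
    by (auto intro!: image_eqI[of _ _ "((y - \<beta> * x3) / x1, \<beta>)"])
qed

lemma roots_subset_Fp_span: "\<exists>x1 x3. K \<subseteq> (\<lambda>(\<alpha>, \<beta>). \<alpha> * x1 + \<beta> * x3) ` (Fp \<times> Fp)"
proof (cases "K \<subseteq> {0}")
  case True
  have "0 \<in> (\<lambda>(\<alpha>, \<beta>). \<alpha> * 0 + \<beta> * 0) ` (Fp \<times> Fp)"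
    by (rule image_eqI[of _ _ "(0, 0)"]) auto
  with True show ?thesis
    by blast
next
  case False
  then obtain x1 where x1: "x1 \<in> K" "x1 \<noteq> 0"
    by blast
  show ?thesis
  proof (cases "\<exists>x3\<in>K. moore_det k x1 x3 \<noteq> 0")
    case True
    then show ?thesis
      using root_in_Fp_span[OF x1] by blast
  next
    case False
    have "y \<in> (\<lambda>(\<alpha>, \<beta>). \<alpha> * x1 + \<beta> * 0) ` (Fp \<times> Fp)" if "y \<in> K" for y
      using div_in_Fp_if_moore_det_eq_0[OF coprime_k_m x1(2), of y] False that x1(2)
      by (auto intro!: image_eqI[of _ _ "(y / x1, 0)"])
    then show ?thesis
      by blast
  qed
qed

lemma card_linearized_roots_le: "card K \<le> p ^ 2"
proof -
  obtain x1 x3 where "K \<subseteq> (\<lambda>(\<alpha>, \<beta>). \<alpha> * x1 + \<beta> * x3) ` (Fp \<times> Fp)"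
    using roots_subset_Fp_span by blast
  then have "card K \<le> card ((\<lambda>(\<alpha>, \<beta>). \<alpha> * x1 + \<beta> * x3) ` (Fp \<times> Fp))"
    by (intro card_mono) auto
  also have "\<dots> \<le> card (Fp \<times> Fp)"
    by (rule card_image_le) simp
  finally show ?thesis
    by (simp add: card_cartesian_product card_Fp power2_eq_square)
qed

end

section \<open>The form \<open>Tr(A x\<^sup>2 + C x\<^bsup>p^k+1\<^esup>)\<close>\<close>

definition quad_tr :: "nat \<Rightarrow> 'a \<Rightarrow> 'a \<Rightarrow> 'a \<Rightarrow> 'a" where
  "quad_tr k A C x = tr p m (A * x ^ 2 + C * x ^ (p ^ k + 1))"

definition quad_tr_polar :: "nat \<Rightarrow> 'a \<Rightarrow> 'a \<Rightarrow> 'a \<Rightarrow> 'a \<Rightarrow> 'a" where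
  "quad_tr_polar k A C x z = tr p m (2 * A * x * z + C * (x ^ p ^ k * z + x * z ^ p ^ k))"

lemma quad_tr_add:
  "quad_tr k A C (x + z) = quad_tr k A C x + quad_tr k A C z + quad_tr_polar k A C x z"
proof -
  have "(x + z) ^ (p ^ k + 1) = x ^ (p ^ k + 1) + z ^ (p ^ k + 1) + (x ^ p ^ k * z + x * z ^ p ^ k)"
    by (simp add: power_add add_power_prime_power algebra_simps)
  then have "A * (x + z) ^ 2 + C * (x + z) ^ (p ^ k + 1) =
      (A * x ^ 2 + C * x ^ (p ^ k + 1)) + (A * z ^ 2 + C * z ^ (p ^ k + 1)) +
      (2 * A * x * z + C * (x ^ p ^ k * z + x * z ^ p ^ k))"
    by (simp add: power2_eq_square algebra_simps)
  then show ?thesis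
    by (simp only: quad_tr_def quad_tr_polar_def tr_add)
qed

lemma quad_tr_polar_add_right:
  "quad_tr_polar k A C x (z + z') = quad_tr_polar k A C x z + quad_tr_polar k A C x z'"
proof -
  have "2 * A * x * (z + z') + C * (x ^ p ^ k * (z + z') + x * (z + z') ^ p ^ k) =
      (2 * A * x * z + C * (x ^ p ^ k * z + x * z ^ p ^ k)) +
      (2 * A * x * z' + C * (x ^ p ^ k * z' + x * z' ^ p ^ k))"
    by (simp add: add_power_prime_power algebra_simps)
  then show ?thesis
    by (simp only: quad_tr_polar_def tr_add)
qed

lemma quad_tr_mult_Fp:
  assumes "\<alpha> \<in> Fp"
  shows "quad_tr k A C (\<alpha> * x) = \<alpha> ^ 2 * quad_tr k A C x"
proof -
  have "A * (\<alpha> * x) ^ 2 + C * (\<alpha> * x) ^ (p ^ k + 1) = \<alpha> ^ 2 * (A * x ^ 2 + C * x ^ (p ^ k + 1))"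
    by (simp add: power_add power_mult_distrib Fp_power_prime_power[OF assms] power2_eq_square algebra_simps)
  moreover have "\<alpha> ^ 2 \<in> Fp"
    using assms by (simp add: power2_eq_square Fp_mult)
  ultimately show ?thesis
    by (simp add: quad_tr_def tr_mult_Fp)
qed

lemma quad_tr_in_Fp: "quad_tr k A C x \<in> Fp"
  by (simp add: quad_tr_def tr_in_Fp)

lemma Fp_quadratic_form_quad_tr:
  "odd p \<Longrightarrow> Fp_quadratic_form p m (quad_tr k A C) (quad_tr_polar k A C)"
  by unfold_locales
    (simp_all add: prime_p card_UNIV quad_tr_add quad_tr_polar_add_right quad_tr_mult_Fp quad_tr_in_Fp)

lemma quad_tr_polar_eq_tr:
  "quad_tr_polar k A C z u = tr p m (z * (2 * A * u + C * u ^ p ^ k + (C * u) ^ p ^ (k * (m - 1))))"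
proof -
  have "tr p m (C * u * z ^ p ^ k) = tr p m ((C * u * z ^ p ^ k) ^ p ^ (k * (m - 1)))"
    by (rule tr_power_prime_power[symmetric])
  also have "\<dots> = tr p m (z * (C * u) ^ p ^ (k * (m - 1)))"
    by (simp only: power_mult_distrib[of "C * u"] power_power_prime_power_mod complement_mod_eq_0
        power_0 power_one_right mult.commute)
  finally have shift: "tr p m (C * u * z ^ p ^ k) = tr p m (z * (C * u) ^ p ^ (k * (m - 1)))" .
  have "quad_tr_polar k A C z u = tr p m (z * (2 * A * u + C * u ^ p ^ k) + C * u * z ^ p ^ k)"
    unfolding quad_tr_polar_def by (rule arg_cong[where f = "tr p m"]) (simp add: algebra_simps)
  also have "\<dots> = tr p m (z * (2 * A * u + C * u ^ p ^ k)) + tr p m (z * (C * u) ^ p ^ (k * (m - 1)))"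
    by (simp only: tr_add shift)
  finally show ?thesis
    by (simp only: tr_add[symmetric] distrib_left)
qed

text \<open>Applying \<open>x \<mapsto> x\<^bsup>p^k\<^esup>\<close> to the radical equation
  \<open>2 A u + C u\<^bsup>p^k\<^esup> + (C u)\<^bsup>p^-k\<^esup> = 0\<close> turns it into a linearized polynomial in \<open>u\<close>.\<close>
lemma radical_quad_tr_linearized:
  assumes "\<And>z. quad_tr_polar k A C z u = 0"
  shows "C ^ p ^ k * (u ^ p ^ k) ^ p ^ k + 2 * A ^ p ^ k * u ^ p ^ k + C * u = 0"
proof -
  have "2 * A * u + C * u ^ p ^ k + (C * u) ^ p ^ (k * (m - 1)) = 0"
    by (rule tr_mult_eq_0_imp_eq_0) (use assms in \<open>simp add: quad_tr_polar_eq_tr\<close>)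
  then have "(2 * A * u + C * u ^ p ^ k + (C * u) ^ p ^ (k * (m - 1))) ^ p ^ k = 0"
    using p_gt_1 by simp
  then have "(2 * A * u) ^ p ^ k + (C * u ^ p ^ k) ^ p ^ k + ((C * u) ^ p ^ (k * (m - 1))) ^ p ^ k = 0"
    by (simp only: add_power_prime_power)
  moreover have "(2 * A * u) ^ p ^ k = 2 * A ^ p ^ k * u ^ p ^ k"
    using Fp_power_prime_power[OF Fp_of_nat[of 2]] by (simp add: power_mult_distrib)
  moreover have "(C * u ^ p ^ k) ^ p ^ k = C ^ p ^ k * (u ^ p ^ k) ^ p ^ k"
    by (rule power_mult_distrib)
  moreover have "((C * u) ^ p ^ (k * (m - 1))) ^ p ^ k = C * u"
    using complement_mod_eq_0 by (simp only: power_power_prime_power_mod add.commute) simp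
  ultimately show ?thesis
    by (simp add: ac_simps)
qed

definition char_sum :: "nat \<Rightarrow> 'a \<Rightarrow> 'a \<Rightarrow> complex" where
  "char_sum k A C = (\<Sum>y\<in>{1..<p}. \<Sum>x\<in>UNIV. chi p m y (A * x ^ 2 + C * x ^ (p ^ k + 1)))"

lemma S_sum_eq_char_sum:
  "S_sum p m k lam a b c = char_sum k (a + b) c + char_sum k ((a - b) * of_int lam) (c * of_int lam)"
  by (simp add: S_sum_def char_sum_def sum.distrib)

lemma char_sum_0_0: "char_sum k 0 0 = of_nat ((p - 1) * p ^ m)"
  using fp_val_of_nat[of 0] card_UNIV by (simp add: char_sum_def chi_def)

context
  fixes k :: nat and s :: 'a
  assumes odd_p: "odd p" and odd_m: "odd m" and coprime_k_m: "coprime k m"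
    and s_in_Fp: "s \<in> Fp" and norm_neq_0: "s ^ 2 + 1 \<noteq> 0"
    and square_classes: "\<And>w. w \<in> Fp \<Longrightarrow> w \<noteq> 0 \<Longrightarrow> \<exists>\<alpha>\<in>Fp. \<alpha> \<noteq> 0 \<and> (w = \<alpha> ^ 2 \<or> w = (s ^ 2 + 1) * \<alpha> ^ 2)"
begin

lemma char_sum_nonzero:
  assumes "card {u. \<forall>z. quad_tr_polar k A C z u = 0} \<le> p ^ 2" "char_sum k A C \<noteq> 0"
  shows "card {u. \<forall>z. quad_tr_polar k A C z u = 0} = p \<and>
    char_sum k A C \<in> {of_nat ((p - 1) * p ^ ((m + 1) div 2)), - of_nat ((p - 1) * p ^ ((m + 1) div 2))}"
proof -
  interpret Q: Fp_quadratic_form p m field_type "quad_tr k A C" "quad_tr_polar k A C"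
    using odd_p by (rule Fp_quadratic_form_quad_tr)
  have "char_sum k A C = (\<Sum>y\<in>{1..<p}. Q.gauss_sum (of_nat y))"
    by (simp add: char_sum_def Q.gauss_sum_def chi_eq_addchar quad_tr_def)
  also have "\<dots> = (\<Sum>w\<in>Fp - {0}. Q.gauss_sum w)"
    by (rule sum_of_nat_eq_sum_Fp)
  finally show ?thesis
    using Q.sum_gauss_sum_nonzero[of "s ^ 2 + 1"] Q.power2_gauss_sum_mult_norm[OF s_in_Fp norm_neq_0 Fp_1]
      s_in_Fp norm_neq_0 square_classes odd_m assms
    by (simp add: Q.radical_def Fp_add Fp_mult power2_eq_square)
qed

lemma char_sum_values:
  assumes "C \<noteq> 0"
  shows "char_sum k A C \<in> {0, of_nat ((p - 1) * p ^ ((m + 1) div 2)), - of_nat ((p - 1) * p ^ ((m + 1) div 2))}"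
proof -
  have "card {u. \<forall>z. quad_tr_polar k A C z u = 0} \<le> p ^ 2"
    by (intro card_linearized_roots_le[where a = "C ^ p ^ k" and b = "2 * A ^ p ^ k" and c = C])
      (auto simp: assms coprime_k_m p_gt_1 intro!: radical_quad_tr_linearized)
  then show ?thesis
    using char_sum_nonzero by auto
qed

lemma char_sum_nondegenerate:
  assumes "A \<noteq> 0"
  shows "char_sum k A 0 = 0"
proof (rule ccontr)
  have "{u. \<forall>z. quad_tr_polar k A 0 z u = 0} = {0}"
  proof safe
    fix u assume "\<forall>z. quad_tr_polar k A 0 z u = 0"
    then have "2 * A ^ p ^ k * u ^ p ^ k = 0"
      using radical_quad_tr_linearized[where k = k and A = A and C = 0 and u = u] p_gt_1
      by (simp add: power_0_left)
    then show "u = 0"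
      using assms two_neq_0_if_odd[OF odd_p] by simp
  qed (simp add: quad_tr_polar_def)
  moreover assume "char_sum k A 0 \<noteq> 0"
  ultimately show False
    using char_sum_nonzero[of A 0] p_gt_1 by simp
qed

end

end

theorem lemma3p2:
  fixes p m k :: nat and lam :: int and a b c :: "'a::{field,finite}"
  assumes "prime p" and "odd p"
    and "card (UNIV::'a set) = p ^ m"
    and "m \<ge> 3" and "odd m"
    and "k \<ge> 1" and "even k" and "gcd m k = 1"
    and "\<not> QuadRes (int p) lam"
  shows "S_sum p m k lam a b c \<in>
    {0, of_nat ((p - 1) * p ^ m), of_nat (2 * (p - 1) * p ^ m),
     of_nat ((p - 1) * p ^ ((m + 1) div 2)), - of_nat ((p - 1) * p ^ ((m + 1) div 2)),
     of_nat (2 * (p - 1) * p ^ ((m + 1) div 2)), - of_nat (2 * (p - 1) * p ^ ((m + 1) div 2))}"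
proof -
  interpret prime_power_field p m "TYPE('a)"
    using assms(1,3) by unfold_locales
  have "coprime k m"
    using assms(8) by (simp only: coprime_iff_gcd_eq_1 gcd.commute)
  obtain s where s: "s \<in> Fp" "s ^ 2 + 1 \<noteq> 0"
    and classes: "\<forall>w\<in>Fp. w \<noteq> 0 \<longrightarrow> (\<exists>\<alpha>\<in>Fp. \<alpha> \<noteq> 0 \<and> (w = \<alpha> ^ 2 \<or> w = (s ^ 2 + 1) * \<alpha> ^ 2))"
    using ex_square_classes[OF assms(2,9)] by blast
  note context_assms = assms(2,5) \<open>coprime k m\<close> s classes[rule_format]
  let ?X = "of_nat ((p - 1) * p ^ ((m + 1) div 2)) :: complex"
  let ?Y = "of_nat ((p - 1) * p ^ m) :: complex"
  have degenerate: "char_sum k A 0 \<in> {0, ?Y}" for A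
    using char_sum_0_0 char_sum_nondegenerate[OF context_assms] by (cases "A = 0") auto
  have nondegenerate: "C \<noteq> 0 \<Longrightarrow> char_sum k A C \<in> {0, ?X, - ?X}" for A C
    by (rule char_sum_values[OF context_assms])
  show ?thesis
    unfolding S_sum_eq_char_sum
    using degenerate[of "a + b"] degenerate[of "(a - b) * of_int lam"]
      nondegenerate[of c "a + b"] nondegenerate[of "c * of_int lam" "(a - b) * of_int lam"]
      of_int_neq_0_if_not_QuadRes[OF assms(9)]
    by (cases "c = 0") auto
qed

end
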